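(* Let $G=\langle V,E\rangle$ be a directed graph with non-empty finite sets of vertices $V$ (object constants) and edges $E\subseteq V\times V$, where every vertex occurs in some edge, and let $\mathcal{I}$ be a Herbrand interpretation over the signature $\{\mathit{in}\}$. Then $\mathcal{I}$ is an answer set of the modular program $\Pi_1(E)$ if and only if $\mathit{in}^{\mathcal{I}}$ is (the edge set of) a Hamiltonian cycle of $G$, i.e. the elements of $\mathit{in}^{\mathcal{I}}$ can be arranged as a directed cycle $(v_1,v_2),\dots,(v_n,v_1)$ with $v_1,\dots,v_n$ pairwise distinct and $\{v_1,\dots,v_n\}=V$.
   Context: Formulas: (F1) $\forall xy(\mathit{edge}(x,y)\to\mathit{vertex}(x))$; (F2) $\forall xy(\mathit{edge}(y,x)\to\mathit{vertex}(x))$; (F3) $\forall xy(\neg\neg\mathit{in}(x,y)\wedge\mathit{edge}(x,y)\to\mathit{in}(x,y))$; (F4) $\forall xy(\mathit{in}(x,y)\to r(x,y))$; (F5) $\forall xyz(r(x,z)\wedge r(z,y)\to r(x,y))$; (F6) $\forall xy(\neg r(x,y)\wedge\mathit{vertex}(x)\wedge\mathit{vertex}(y)\to\bot)$; (F7) $\forall xyz(\mathit{in}(x,y)\wedge\mathit{in}(x,z)\wedge\neg(y=z)\to\bot)$. $\neg G$ abbreviates $G\to\bot$. $\mathrm{SM}_{\vec{p}}[F]:=F\wedge\neg\exists\vec{U}((\vec{U}<\vec{p})\wedge F^* )$ with fresh predicate variables $\vec{U}$, where $\vec{U}<\vec{p}$ means $\bigwedge_i\forall\vec{x}(U_i(\vec{x})\to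 p_i(\vec{x}))\wedge\neg\bigwedge_i\forall\vec{x}(p_i(\vec{x})\to U_i(\vec{x}))$, and $F^*$: $F^*=F$ for atomic $F$ without members of $\vec{p}$; $p_i(\vec{t})^*=U_i(\vec{t})$; $(G\otimes H)^*=G^*\otimes H^*$ for $\otimes\in\{\wedge,\vee\}$; $(G\to H)^*=(G^*\to H^* )\wedge(G\to H)$; $(Qx\,G)^*=Qx\,G^*$. A def-module $(\vec{p}:F)$ has $\Phi((\vec{p}:F))=\mathrm{SM}_{\vec{p}}[F]$; a bare formula $F$ as a module means $(\emptyset:F)$ with $\Phi=F$. A modular program $\Pi=\langle\mathcal{S},\mathcal{M}\rangle$ has public predicates $\mathcal{S}$ and modules $\mathcal{M}$ (def-modules or modular programs), with $\Phi(\Pi)=\exists\vec{h}\bigwedge_{M\in\mathcal{M}}\Phi(M)$, $\vec{h}$ the free predicate symbols of the $\Phi(M)$ not in $\mathcal{S}$. An answer set of $\Pi$ is a Herbrand interpretation over $\mathcal{S}$ satisfying $\Phi(\Pi)$. Define $\Pi_{cn}=\langle\{\mathit{vertex},\mathit{in}\},\{(r:\mathrm{F4}\wedge\mathrm{F5}),\mathrm{F6}\}\rangle$, $\Pi_{hc}=\langle\{\mathit{vertex},\mathit{in}\},\{\Pi_{cn},\mathrm{F7}\}\rangle$, $\Pi_{sg}=\langle\{\mathit{vertex},\mathit{edge},\mathit{in}\},\{(\mathit{vertex}:\mathrm{F1}\wedge\mathrm{F2}),(\mathit{in}:\mathrm{F3})\}\rangle$, $\Pi_1=\langle\{\mathit{edge},\mathit{in}\},\{\Pi_{sg},\Pi_{hc}\}\rangle$,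 $M_E=(\mathit{edge}:\bigwedge\{\mathit{edge}(a,b)\mid(a,b)\in E\})$, and $\Pi_1(E)=\langle\{\mathit{in}\},\{\Pi_1,M_E\}\rangle$. *)

theory Defs
  imports Main
begin

datatype 'a trm = Var nat | Cst 'a

datatype ('p, 'a) form =
    Atom 'p "'a trm list"
  | Eq "'a trm" "'a trm"
  | Bot
  | Conj "('p, 'a) form" "('p, 'a) form"
  | Disj "('p, 'a) form" "('p, 'a) form"
  | Imp "('p, 'a) form" "('p, 'a) form"
  | All nat "('p, 'a) form"
  | Ex nat "('p, 'a) form"

definition Neg :: "('p, 'a) form \<Rightarrow> ('p, 'a) form" where
  "Neg G = Imp G Bot"

definition Top :: "('p, 'a) form" where
  "Top = Imp Bot Bot"

fun tval :: "(nat \<Rightarrow> 'a) \<Rightarrow> 'a trm \<Rightarrow> 'a" where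
  "tval \<sigma> (Var n) = \<sigma> n"
| "tval \<sigma> (Cst c) = c"

text \<open>Satisfaction; D is the Herbrand universe (the object constants), I interprets
  each predicate symbol as a set of tuples (lists), \<sigma> assigns object variables.
  Equality is identity (Herbrand interpretations: distinct constants denote distinct objects).\<close>
fun sat :: "'a set \<Rightarrow> ('p \<Rightarrow> 'a list set) \<Rightarrow> (nat \<Rightarrow> 'a) \<Rightarrow> ('p, 'a) form \<Rightarrow> bool" where
  "sat D I \<sigma> (Atom p ts) = (map (tval \<sigma>) ts \<in> I p)"
| "sat D I \<sigma> (Eq s t) = (tval \<sigma> s = tval \<sigma> t)"
| "sat D I \<sigma> Bot = False"
| "sat D I \<sigma> (Conj G H) = (sat D I \<sigma> G \<and> sat D I \<sigma> H)"
| "sat D I \<sigma> (Disj G H) = (sat D I \<sigma> G \<or> sat D I \<sigma> H)"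
| "sat D I \<sigma> (Imp G H) = (sat D I \<sigma> G \<longrightarrow> sat D I \<sigma> H)"
| "sat D I \<sigma> (All x G) = (\<forall>d\<in>D. sat D I (\<sigma>(x := d)) G)"
| "sat D I \<sigma> (Ex x G) = (\<exists>d\<in>D. sat D I (\<sigma>(x := d)) G)"

text \<open>Satisfaction of F* (for intensional predicates ps replaced by the predicate
  variables U), following the recursive clauses of the paper.\<close>
fun sat_star :: "'a set \<Rightarrow> ('p \<Rightarrow> 'a list set) \<Rightarrow> 'p set \<Rightarrow> ('p \<Rightarrow> 'a list set)
                  \<Rightarrow> (nat \<Rightarrow> 'a) \<Rightarrow> ('p, 'a) form \<Rightarrow> bool" where
  "sat_star D I ps U \<sigma> (Atom p ts) =
     (if p \<in> ps then map (tval \<sigma>) ts \<in> U p else map (tval \<sigma>) ts \<in> I p)"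
| "sat_star D I ps U \<sigma> (Eq s t) = (tval \<sigma> s = tval \<sigma> t)"
| "sat_star D I ps U \<sigma> Bot = False"
| "sat_star D I ps U \<sigma> (Conj G H) = (sat_star D I ps U \<sigma> G \<and> sat_star D I ps U \<sigma> H)"
| "sat_star D I ps U \<sigma> (Disj G H) = (sat_star D I ps U \<sigma> G \<or> sat_star D I ps U \<sigma> H)"
| "sat_star D I ps U \<sigma> (Imp G H) =
     ((sat_star D I ps U \<sigma> G \<longrightarrow> sat_star D I ps U \<sigma> H) \<and> (sat D I \<sigma> G \<longrightarrow> sat D I \<sigma> H))"
| "sat_star D I ps U \<sigma> (All x G) = (\<forall>d\<in>D. sat_star D I ps U (\<sigma>(x := d)) G)"
| "sat_star D I ps U \<sigma> (Ex x G) = (\<exists>d\<in>D. sat_star D I ps U (\<sigma>(x := d)) G)"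

definition holds :: "'a set \<Rightarrow> ('p \<Rightarrow> 'a list set) \<Rightarrow> ('p, 'a) form \<Rightarrow> bool" where
  "holds D I F = (\<forall>\<sigma>. range \<sigma> \<subseteq> D \<longrightarrow> sat D I \<sigma> F)"

definition holds_star :: "'a set \<Rightarrow> ('p \<Rightarrow> 'a list set) \<Rightarrow> 'p set \<Rightarrow> ('p \<Rightarrow> 'a list set)
                          \<Rightarrow> ('p, 'a) form \<Rightarrow> bool" where
  "holds_star D I ps U F = (\<forall>\<sigma>. range \<sigma> \<subseteq> D \<longrightarrow> sat_star D I ps U \<sigma> F)"

definition pred_less :: "'p set \<Rightarrow> ('p \<Rightarrow> 'a list set) \<Rightarrow> ('p \<Rightarrow> 'a list set) \<Rightarrow> bool" where
  "pred_less ps U I = ((\<forall>p\<in>ps. U p \<subseteq> I p) \<and> \<not> (\<forall>p\<in>ps. I p \<subseteq> U p))"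

definition rel_interp :: "'a set \<Rightarrow> ('p \<Rightarrow> nat) \<Rightarrow> ('p \<Rightarrow> 'a list set) \<Rightarrow> bool" where
  "rel_interp D ar I = (\<forall>q. I q \<subseteq> {xs. length xs = ar q \<and> set xs \<subseteq> D})"

text \<open>SM_ps[F]; the second-order quantifier over U ranges over relations on D of the
  right arities.\<close>
definition SM :: "'a set \<Rightarrow> ('p \<Rightarrow> nat) \<Rightarrow> 'p set \<Rightarrow> ('p, 'a) form \<Rightarrow> ('p \<Rightarrow> 'a list set) \<Rightarrow> bool" where
  "SM D ar ps F I = (holds D I F \<and>
     \<not> (\<exists>U. rel_interp D ar U \<and> pred_less ps U I \<and> holds_star D I ps U F))"

fun preds :: "('p, 'a) form \<Rightarrow> 'p set" where
  "preds (Atom p ts) = {p}"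
| "preds (Eq s t) = {}"
| "preds Bot = {}"
| "preds (Conj G H) = preds G \<union> preds H"
| "preds (Disj G H) = preds G \<union> preds H"
| "preds (Imp G H) = preds G \<union> preds H"
| "preds (All x G) = preds G"
| "preds (Ex x G) = preds G"

datatype ('p, 'a) module =
    FormM "('p, 'a) form"
  | DefM "'p set" "('p, 'a) form"
  | ProgM "'p set" "('p, 'a) module list"

fun fpreds :: "('p, 'a) module \<Rightarrow> 'p set" where
  "fpreds (FormM F) = preds F"
| "fpreds (DefM ps F) = ps \<union> preds F"
| "fpreds (ProgM S Ms) = (\<Union>M\<in>set Ms. fpreds M) \<inter> S"

text \<open>Phi(M) evaluated in an interpretation I; the existential second-order quantifier over
  hidden predicates h ranges over relations on D of the right arities.\<close>
fun phi :: "'a set \<Rightarrow> ('p \<Rightarrow> nat) \<Rightarrow> ('p, 'a) module \<Rightarrow> ('p \<Rightarrow> 'a list set) \<Rightarrow> bool" where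
  "phi D ar (FormM F) I = holds D I F"
| "phi D ar (DefM ps F) I = SM D ar ps F I"
| "phi D ar (ProgM S Ms) I =
     (\<exists>J. rel_interp D ar J \<and>
          (\<forall>q. q \<notin> (\<Union>M\<in>set Ms. fpreds M) - S \<longrightarrow> J q = I q) \<and>
          (\<forall>M\<in>set Ms. phi D ar M J))"

text \<open>Herbrand interpretation over the signature S (predicates outside S are uninterpreted,
  represented as empty).\<close>
definition herbrand_over :: "'a set \<Rightarrow> ('p \<Rightarrow> nat) \<Rightarrow> 'p set \<Rightarrow> ('p \<Rightarrow> 'a list set) \<Rightarrow> bool" where
  "herbrand_over D ar S I = (rel_interp D ar I \<and> (\<forall>q. q \<notin> S \<longrightarrow> I q = {}))"

fun publics :: "('p, 'a) module \<Rightarrow> 'p set" where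
  "publics (ProgM S Ms) = S"
| "publics (DefM ps F) = {}"
| "publics (FormM F) = {}"

definition answer_set :: "'a set \<Rightarrow> ('p \<Rightarrow> nat) \<Rightarrow> ('p, 'a) module \<Rightarrow> ('p \<Rightarrow> 'a list set) \<Rightarrow> bool" where
  "answer_set D ar P I = (herbrand_over D ar (publics P) I \<and> phi D ar P I)"

datatype pred = Edge | Vertex | In | R

fun arity :: "pred \<Rightarrow> nat" where
  "arity Edge = 2" | "arity Vertex = 1" | "arity In = 2" | "arity R = 2"

abbreviation "vx \<equiv> Var 0"
abbreviation "vy \<equiv> Var 1"
abbreviation "vz \<equiv> Var 2"

definition F1 :: "(pred, 'a) form" where
  "F1 = All 0 (All 1 (Imp (Atom Edge [vx, vy]) (Atom Vertex [vx])))"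
definition F2 :: "(pred, 'a) form" where
  "F2 = All 0 (All 1 (Imp (Atom Edge [vy, vx]) (Atom Vertex [vx])))"
definition F3 :: "(pred, 'a) form" where
  "F3 = All 0 (All 1 (Imp (Conj (Neg (Neg (Atom In [vx, vy]))) (Atom Edge [vx, vy]))
                           (Atom In [vx, vy])))"
definition F4 :: "(pred, 'a) form" where
  "F4 = All 0 (All 1 (Imp (Atom In [vx, vy]) (Atom R [vx, vy])))"
definition F5 :: "(pred, 'a) form" where
  "F5 = All 0 (All 1 (All 2 (Imp (Conj (Atom R [vx, vz]) (Atom R [vz, vy])) (Atom R [vx, vy]))))"
definition F6 :: "(pred, 'a) form" where
  "F6 = All 0 (All 1 (Imp (Conj (Conj (Neg (Atom R [vx, vy])) (Atom Vertex [vx])) (Atom Vertex [vy]))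
                           Bot))"
definition F7 :: "(pred, 'a) form" where
  "F7 = All 0 (All 1 (All 2 (Imp (Conj (Conj (Atom In [vx, vy]) (Atom In [vx, vz])) (Neg (Eq vy vz)))
                                Bot)))"

definition Pi_cn :: "(pred, 'a) module" where
  "Pi_cn = ProgM {Vertex, In} [DefM {R} (Conj F4 F5), FormM F6]"
definition Pi_hc :: "(pred, 'a) module" where
  "Pi_hc = ProgM {Vertex, In} [Pi_cn, FormM F7]"
definition Pi_sg :: "(pred, 'a) module" where
  "Pi_sg = ProgM {Vertex, Edge, In} [DefM {Vertex} (Conj F1 F2), DefM {In} F3]"
definition Pi_1 :: "(pred, 'a) module" where
  "Pi_1 = ProgM {Edge, In} [Pi_sg, Pi_hc]"

text \<open>Conjunction of the ground facts edge(a,b), (a,b) in E (E finite; listed in some order,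
  terminated by the trivially true formula Top).\<close>
definition edge_facts :: "('a \<times> 'a) set \<Rightarrow> (pred, 'a) form" where
  "edge_facts E = foldr Conj (map (\<lambda>(a, b). Atom Edge [Cst a, Cst b]) (SOME xs. set xs = E)) Top"

definition M_E :: "('a \<times> 'a) set \<Rightarrow> (pred, 'a) module" where
  "M_E E = DefM {Edge} (edge_facts E)"

definition Pi_1E :: "('a \<times> 'a) set \<Rightarrow> (pred, 'a) module" where
  "Pi_1E E = ProgM {In} [Pi_1, M_E E]"

definition ham_cycle :: "'a set \<Rightarrow> ('a \<times> 'a) set \<Rightarrow> ('a \<times> 'a) set \<Rightarrow> bool" where
  "ham_cycle V E C = (C \<subseteq> E \<and> (\<exists>vs. vs \<noteq> [] \<and> distinct vs \<and> set vs = V \<and>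
       C = {(vs ! i, vs ! ((i + 1) mod length vs)) | i. i < length vs}))"

end

theory Submission
  imports Defs "HOL-Combinatorics.Orbits"
begin

text \<open>The stable-model semantics of each def-module makes its defined predicate the least
  relation closed under the module's rules: \<open>edge\<close> is exactly \<open>E\<close>, \<open>vertex\<close> is the set of
  endpoints of edges (hence all of \<open>V\<close>), \<open>in\<close> is any subset of \<open>edge\<close> (the doubly negated
  premise makes F3 a choice rule), and \<open>r\<close> is the transitive closure of \<open>in\<close>. The remaining
  constraints F6 and F7 say that \<open>in\<close> is functional and that its transitive closure is all of
  \<open>V \<times> V\<close>. A functional relation on \<open>V\<close> whose transitive closure is total is the successor
  relation of a single orbit of its successor function, i.e.\ a Hamiltonian cycle.\<close>

section \<open>Hamiltonian cycles as functional strongly connected relations\<close>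

definition cycle_rel :: "'a list \<Rightarrow> ('a \<times> 'a) set" where
  "cycle_rel vs = {(vs ! i, vs ! ((i + 1) mod length vs)) | i. i < length vs}"

lemma ham_cycle_iff_cycle_rel:
  "ham_cycle V E C \<longleftrightarrow> C \<subseteq> E \<and> (\<exists>vs. vs \<noteq> [] \<and> distinct vs \<and> set vs = V \<and> C = cycle_rel vs)"
  unfolding ham_cycle_def cycle_rel_def ..

lemma single_valued_cycle_rel:
  assumes "distinct vs"
  shows "single_valued (cycle_rel vs)"
proof (rule single_valuedI)
  fix x y z assume "(x, y) \<in> cycle_rel vs" "(x, z) \<in> cycle_rel vs"
  then obtain i j where ij: "i < length vs" "j < length vs" "x = vs ! i" "x = vs ! j"
      "y = vs ! ((i + 1) mod length vs)" "z = vs ! ((j + 1) mod length vs)"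
    unfolding cycle_rel_def by auto
  with assms have "i = j" by (simp add: nth_eq_iff_index_eq)
  with ij show "y = z" by simp
qed

lemma cycle_rel_trancl:
  assumes "vs \<noteq> []"
  shows "set vs \<times> set vs \<subseteq> (cycle_rel vs)\<^sup>+"
proof -
  let ?n = "length vs"
  have step: "(vs ! i, vs ! ((i + Suc k) mod ?n)) \<in> (cycle_rel vs)\<^sup>+" if "i < ?n" for i k
  proof (induction k)
    case 0
    show ?case using that unfolding cycle_rel_def by auto
  next
    case (Suc k)
    have "(i + Suc k) mod ?n < ?n" using assms by simp
    moreover have "((i + Suc k) mod ?n + 1) mod ?n = (i + Suc (Suc k)) mod ?n"
      by (simp add: mod_Suc_eq)
    ultimately have "(vs ! ((i + Suc k) mod ?n), vs ! ((i + Suc (Suc k)) mod ?n)) \<in> cycle_rel vs"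
      unfolding cycle_rel_def by (metis (mono_tags, lifting) mem_Collect_eq)
    with Suc.IH show ?case by (rule trancl_into_trancl)
  qed
  show ?thesis
  proof (clarsimp simp: in_set_conv_nth)
    fix i j assume ij: "i < ?n" "j < ?n"
    have "i + Suc (?n - i + j - 1) = ?n + j" using ij by simp
    then have "(i + Suc (?n - i + j - 1)) mod ?n = j" using ij by simp
    with step[OF ij(1), of "?n - i + j - 1"] show "(vs ! i, vs ! j) \<in> (cycle_rel vs)\<^sup>+"
      by simp
  qed
qed

lemma orbit_cycle_list:
  assumes "x \<in> orbit f x"
  obtains vs where "vs \<noteq> []" "distinct vs" "set vs = orbit f x"
    "cycle_rel vs = {(y, f y) | y. y \<in> orbit f x}"
proof
  define p where "p = funpow_dist1 f x x"
  define vs where "vs = map (\<lambda>n. (f ^^ n) x) [0..<p]"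
  have period: "(f ^^ p) x = x" unfolding p_def using funpow_dist1_prop[OF assms] .
  have len: "length vs = p" unfolding vs_def by simp
  show "vs \<noteq> []" using len unfolding p_def by auto
  have inj: "inj_on (\<lambda>n. (f ^^ n) x) {0..<p}"
    unfolding p_def by (rule inj_on_funpow_dist1[OF assms])
  have orbit: "orbit f x = (\<lambda>n. (f ^^ n) x) ` {0..<p}"
    unfolding p_def by (rule orbit_conv_funpow_dist1[OF assms])
  show "distinct vs" unfolding vs_def distinct_map using inj by simp
  show set_vs: "set vs = orbit f x" unfolding vs_def orbit by simp
  have "vs ! ((i + 1) mod p) = f (vs ! i)" if "i < p" for i
  proof -
    have "vs ! ((i + 1) mod p) = (f ^^ ((i + 1) mod p)) x"
      unfolding vs_def using \<open>i < p\<close> by simp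
    also have "\<dots> = (f ^^ Suc i) x" using funpow_mod_eq[OF period] by simp
    finally show ?thesis unfolding vs_def using \<open>i < p\<close> by simp
  qed
  then show "cycle_rel vs = {(y, f y) | y. y \<in> orbit f x}"
    unfolding cycle_rel_def set_vs[symmetric] by (force simp: in_set_conv_nth len)
qed

lemma trancl_into_orbit:
  assumes "\<And>u w. (u, w) \<in> C \<Longrightarrow> w = f u" and "(x, y) \<in> C\<^sup>+"
  shows "y \<in> orbit f x"
  using assms(2) by induction (auto dest: assms(1) intro: orbit.intros)

lemma single_valued_strongly_connected_cycle_rel:
  assumes CV: "C \<subseteq> V \<times> V" and sv: "single_valued C" and "V \<noteq> {}" and conn: "V \<times> V \<subseteq> C\<^sup>+"
  obtains vs where "vs \<noteq> []" "distinct vs" "set vs = V" "C = cycle_rel vs"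
proof -
  obtain v where v: "v \<in> V" using \<open>V \<noteq> {}\<close> by blast
  define f where "f u = (SOME w. (u, w) \<in> C)" for u
  have succ: "(u, f u) \<in> C" if "u \<in> V" for u
  proof -
    from that conn have "(u, u) \<in> C\<^sup>+" by blast
    then obtain w where "(u, w) \<in> C" by (auto dest: tranclD)
    then show ?thesis unfolding f_def by (rule someI)
  qed
  have graph: "w = f u" if "(u, w) \<in> C" for u w
    using that succ CV sv by (blast dest: single_valuedD)
  have "orbit f v \<subseteq> V"
  proof
    fix y assume "y \<in> orbit f v" then show "y \<in> V"
      by induction (use v succ CV in auto)
  qed
  moreover have "V \<subseteq> orbit f v"
  proof
    fix u assume "u \<in> V"
    with conn v have "(v, u) \<in> C\<^sup>+" by blast
    then show "u \<in> orbit f v" using trancl_into_orbit[of C f] graph by blast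
  qed
  ultimately have V: "V = orbit f v" by blast
  have "C = {(y, f y) | y. y \<in> V}" using succ graph CV by blast
  with V v orbit_cycle_list[of v f] that show thesis by metis
qed

lemma ham_cycle_iff_strongly_connected:
  assumes "C \<subseteq> V \<times> V" and "V \<noteq> {}"
  shows "ham_cycle V E C \<longleftrightarrow> C \<subseteq> E \<and> single_valued C \<and> V \<times> V \<subseteq> C\<^sup>+"
proof
  assume "ham_cycle V E C"
  then obtain vs where "C \<subseteq> E" "vs \<noteq> []" "distinct vs" "set vs = V" "C = cycle_rel vs"
    unfolding ham_cycle_iff_cycle_rel by blast
  then show "C \<subseteq> E \<and> single_valued C \<and> V \<times> V \<subseteq> C\<^sup>+"
    using single_valued_cycle_rel cycle_rel_trancl by blast
next
  assume "C \<subseteq> E \<and> single_valued C \<and> V \<times> V \<subseteq> C\<^sup>+"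
  then show "ham_cycle V E C"
    using single_valued_strongly_connected_cycle_rel[OF assms(1) _ assms(2)]
    unfolding ham_cycle_iff_cycle_rel by metis
qed

definition rel_of :: "'a list set \<Rightarrow> ('a \<times> 'a) set" where
  "rel_of S = {(x, y). [x, y] \<in> S}"

definition lists_of_rel :: "('a \<times> 'a) set \<Rightarrow> 'a list set" where
  "lists_of_rel T = {[x, y] | x y. (x, y) \<in> T}"

lemma mem_rel_of [simp]: "(x, y) \<in> rel_of S \<longleftrightarrow> [x, y] \<in> S"
  unfolding rel_of_def by simp

lemma mem_lists_of_rel [simp]: "[x, y] \<in> lists_of_rel T \<longleftrightarrow> (x, y) \<in> T"
  unfolding lists_of_rel_def by simp

lemma rel_of_lists_of_rel [simp]: "rel_of (lists_of_rel T) = T"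
  unfolding rel_of_def lists_of_rel_def by simp

lemma rel_interp_binaryE:
  assumes "rel_interp D ar J" "ar q = 2" "xs \<in> J q"
  obtains x y where "xs = [x, y]" "x \<in> D" "y \<in> D"
proof -
  have "xs \<in> {xs. length xs = ar q \<and> set xs \<subseteq> D}"
    using assms(1,3) unfolding rel_interp_def by blast
  with assms(2) have "length xs = 2" "set xs \<subseteq> D" by simp_all
  then show thesis
    using that by (auto simp: numeral_2_eq_2 length_Suc_conv)
qed

lemma rel_of_subset_Times:
  assumes "rel_interp D ar J" "ar q = 2"
  shows "rel_of (J q) \<subseteq> D \<times> D"
proof (rule subrelI)
  fix x y assume "(x, y) \<in> rel_of (J q)"
  then obtain a b where "[x, y] = [a, b]" "a \<in> D" "b \<in> D"
    by (auto elim: rel_interp_binaryE[OF assms])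
  then show "(x, y) \<in> D \<times> D" by simp
qed

lemma subset_iff_rel_of_subset:
  assumes "rel_interp D ar J" "ar q = 2"
  shows "J q \<subseteq> S \<longleftrightarrow> rel_of (J q) \<subseteq> rel_of S"
proof
  show "rel_of (J q) \<subseteq> rel_of S" if "J q \<subseteq> S" using that unfolding rel_of_def by blast
next
  assume rel: "rel_of (J q) \<subseteq> rel_of S"
  show "J q \<subseteq> S"
  proof
    fix xs assume "xs \<in> J q"
    moreover from this obtain x y where "xs = [x, y]" by (rule rel_interp_binaryE[OF assms])
    ultimately show "xs \<in> S" using rel unfolding rel_of_def by blast
  qed
qed

lemma rel_interp_fun_upd:
  assumes "rel_interp D ar J" "S \<subseteq> {xs. length xs = ar q \<and> set xs \<subseteq> D}"
  shows "rel_interp D ar (J(q := S))"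
  using assms unfolding rel_interp_def by auto

lemma lists_of_rel_subset:
  assumes "T \<subseteq> D \<times> D"
  shows "lists_of_rel T \<subseteq> {xs. length xs = 2 \<and> set xs \<subseteq> D}"
  using assms unfolding lists_of_rel_def by auto

section \<open>Stable models with one intensional predicate\<close>

lemma holds_eqI:
  assumes "D \<noteq> {}" and "\<And>\<sigma>. range \<sigma> \<subseteq> D \<Longrightarrow> sat D J \<sigma> F \<longleftrightarrow> P"
  shows "holds D J F \<longleftrightarrow> P"
proof -
  obtain d where "d \<in> D" using assms(1) by blast
  then have "range (\<lambda>_. d) \<subseteq> D" by auto
  then show ?thesis unfolding holds_def using assms(2) by blast
qed

lemma holds_star_eqI:
  assumes "D \<noteq> {}" and "\<And>\<sigma>. range \<sigma> \<subseteq> D \<Longrightarrow> sat_star D J ps U \<sigma> F \<longleftrightarrow> P"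
  shows "holds_star D J ps U F \<longleftrightarrow> P"
proof -
  obtain d where "d \<in> D" using assms(1) by blast
  then have "range (\<lambda>_. d) \<subseteq> D" by auto
  then show ?thesis unfolding holds_star_def using assms(2) by blast
qed

lemma holds_Conj: "holds D J (Conj F G) \<longleftrightarrow> holds D J F \<and> holds D J G"
  unfolding holds_def by auto

lemma holds_star_Conj:
  "holds_star D J ps U (Conj F G) \<longleftrightarrow> holds_star D J ps U F \<and> holds_star D J ps U G"
  unfolding holds_star_def by auto

text \<open>When \<open>F\<close> says that \<open>p\<close> is closed under a condition \<open>P\<close> and \<open>F\<^sup>*\<close> says the same
  of \<open>U\<close>, the minimality part of \<open>SM\<close> singles out the least \<open>P\<close>-closed set.\<close>
lemma SM_single_iff_least:
  assumes ri: "rel_interp D ar J"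
    and X: "X \<subseteq> {xs. length xs = ar p \<and> set xs \<subseteq> D}"
    and least: "P X" "\<And>S. P S \<Longrightarrow> X \<subseteq> S"
    and holds: "holds D J F \<longleftrightarrow> P (J p)"
    and star: "\<And>U. holds D J F \<Longrightarrow> holds_star D J {p} U F \<longleftrightarrow> P (U p)"
  shows "SM D ar {p} F J \<longleftrightarrow> J p = X"
proof
  assume sm: "SM D ar {p} F J"
  then have "holds D J F" unfolding SM_def by blast
  then have "X \<subseteq> J p" using holds least(2) by blast
  show "J p = X"
  proof (rule ccontr)
    assume "J p \<noteq> X"
    with \<open>X \<subseteq> J p\<close> have "pred_less {p} (J(p := X)) J"
      unfolding pred_less_def by auto
    moreover have "rel_interp D ar (J(p := X))" using ri X by (rule rel_interp_fun_upd)
    moreover have "holds_star D J {p} (J(p := X)) F"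
      using star[OF \<open>holds D J F\<close>] least(1) by simp
    ultimately show False using sm unfolding SM_def by blast
  qed
next
  assume "J p = X"
  then have "holds D J F" using holds least(1) by simp
  moreover have "\<not> holds_star D J {p} U F" if "pred_less {p} U J" for U
    using that star[OF \<open>holds D J F\<close>] least(2) \<open>J p = X\<close> unfolding pred_less_def by blast
  ultimately show "SM D ar {p} F J" unfolding SM_def by blast
qed

section \<open>The modules of the Hamiltonian cycle program\<close>

lemma sat_edge_fact_list:
  "sat D J \<sigma> (foldr Conj (map (\<lambda>(a, b). Atom Edge [Cst a, Cst b]) xs) Top)
     \<longleftrightarrow> (\<forall>(a, b)\<in>set xs. [a, b] \<in> J Edge)"
  by (induction xs) (auto simp: Top_def)

lemma sat_star_edge_fact_list:
  "sat_star D J {Edge} U \<sigma> (foldr Conj (map (\<lambda>(a, b). Atom Edge [Cst a, Cst b]) xs) Top)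
     \<longleftrightarrow> (\<forall>(a, b)\<in>set xs. [a, b] \<in> U Edge)"
  by (induction xs) (auto simp: Top_def)

lemma preds_edge_fact_list:
  "preds (foldr Conj (map (\<lambda>(a, b). Atom Edge [Cst a, Cst b]) xs) Top) \<subseteq> {Edge}"
  by (induction xs) (auto simp: Top_def)

lemma SM_edge_facts_iff:
  assumes ri: "rel_interp D arity J" and "D \<noteq> {}" and "finite E" and "E \<subseteq> D \<times> D"
  shows "SM D arity {Edge} (edge_facts E) J \<longleftrightarrow> J Edge = lists_of_rel E"
proof (rule SM_single_iff_least[OF ri, where P = "\<lambda>S. lists_of_rel E \<subseteq> S"])
  have list: "set (SOME xs. set xs = E) = E"
    using \<open>finite E\<close> by (metis (mono_tags) finite_list someI_ex)
  show "holds D J (edge_facts E) \<longleftrightarrow> lists_of_rel E \<subseteq> J Edge"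
    by (rule holds_eqI[OF \<open>D \<noteq> {}\<close>]) (auto simp: edge_facts_def sat_edge_fact_list list lists_of_rel_def)
  show "holds_star D J {Edge} U (edge_facts E) \<longleftrightarrow> lists_of_rel E \<subseteq> U Edge" for U
    by (rule holds_star_eqI[OF \<open>D \<noteq> {}\<close>]) (auto simp: edge_facts_def sat_star_edge_fact_list list lists_of_rel_def)
qed (use lists_of_rel_subset[OF \<open>E \<subseteq> D \<times> D\<close>] in auto)

lemma holds_F1_F2:
  assumes "D \<noteq> {}"
  shows "holds D J (Conj F1 F2) \<longleftrightarrow>
    (\<forall>x\<in>D. \<forall>y\<in>D. [x, y] \<in> J Edge \<or> [y, x] \<in> J Edge \<longrightarrow> [x] \<in> J Vertex)"
  unfolding holds_Conj by (subst (1 2) holds_eqI[OF assms]) (auto simp: F1_def F2_def)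

lemma holds_star_F1_F2:
  assumes "D \<noteq> {}"
  shows "holds_star D J {Vertex} U (Conj F1 F2) \<longleftrightarrow>
    (\<forall>x\<in>D. \<forall>y\<in>D. [x, y] \<in> J Edge \<or> [y, x] \<in> J Edge \<longrightarrow> [x] \<in> U Vertex \<and> [x] \<in> J Vertex)"
  unfolding holds_star_Conj by (subst (1 2) holds_star_eqI[OF assms]) (auto simp: F1_def F2_def)

lemma SM_vertex_iff:
  assumes ri: "rel_interp D arity J" and "D \<noteq> {}" and cover: "D \<subseteq> Field (rel_of (J Edge))"
  shows "SM D arity {Vertex} (Conj F1 F2) J \<longleftrightarrow> J Vertex = {[v] | v. v \<in> D}"
proof (rule SM_single_iff_least[OF ri,
      where P = "\<lambda>S. \<forall>x\<in>D. \<forall>y\<in>D. [x, y] \<in> J Edge \<or> [y, x] \<in> J Edge \<longrightarrow> [x] \<in> S"])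
  show "{[v] | v. v \<in> D} \<subseteq> S"
    if "\<forall>x\<in>D. \<forall>y\<in>D. [x, y] \<in> J Edge \<or> [y, x] \<in> J Edge \<longrightarrow> [x] \<in> S" for S
  proof clarify
    fix v assume "v \<in> D"
    with cover obtain w where w: "(v, w) \<in> rel_of (J Edge) \<or> (w, v) \<in> rel_of (J Edge)"
      unfolding Field_def Domain_iff Range_iff by blast
    moreover have "rel_of (J Edge) \<subseteq> D \<times> D" by (rule rel_of_subset_Times[OF ri]) simp
    ultimately have "w \<in> D" by blast
    with w that \<open>v \<in> D\<close> show "[v] \<in> S" by auto
  qed
qed (use holds_F1_F2[OF \<open>D \<noteq> {}\<close>] holds_star_F1_F2[OF \<open>D \<noteq> {}\<close>] in auto)

lemma SM_in_iff:
  assumes ri: "rel_interp D arity J" and "D \<noteq> {}"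
  shows "SM D arity {In} F3 J \<longleftrightarrow> rel_of (J In) \<subseteq> rel_of (J Edge)"
proof -
  let ?P = "\<lambda>S. \<forall>x\<in>D. \<forall>y\<in>D. [x, y] \<in> J In \<and> [x, y] \<in> J Edge \<longrightarrow> [x, y] \<in> S"
  have "SM D arity {In} F3 J \<longleftrightarrow> J In = J In \<inter> J Edge"
  proof (rule SM_single_iff_least[OF ri, where P = ?P])
    show "J In \<inter> J Edge \<subseteq> {xs. length xs = arity In \<and> set xs \<subseteq> D}"
      using ri unfolding rel_interp_def by blast
    show "?P (J In \<inter> J Edge)" by blast
    show "J In \<inter> J Edge \<subseteq> S" if "?P S" for S
    proof
      fix xs assume xs: "xs \<in> J In \<inter> J Edge"
      then obtain x y where "xs = [x, y]" "x \<in> D" "y \<in> D"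
        using rel_interp_binaryE[OF ri, of In xs] by auto
      with xs that show "xs \<in> S" by blast
    qed
    show "holds D J F3 \<longleftrightarrow> ?P (J In)"
      by (rule holds_eqI[OF \<open>D \<noteq> {}\<close>]) (auto simp: F3_def Neg_def)
    show "holds_star D J {In} U F3 \<longleftrightarrow> ?P (U In)" for U
      by (rule holds_star_eqI[OF \<open>D \<noteq> {}\<close>]) (auto simp: F3_def Neg_def)
  qed
  also have "\<dots> \<longleftrightarrow> J In \<subseteq> J Edge" by blast
  also have "\<dots> \<longleftrightarrow> rel_of (J In) \<subseteq> rel_of (J Edge)"
    by (rule subset_iff_rel_of_subset[OF ri]) simp
  finally show ?thesis .
qed

lemma holds_F4:
  "D \<noteq> {} \<Longrightarrow> holds D J F4 \<longleftrightarrow> (\<forall>x\<in>D. \<forall>y\<in>D. [x, y] \<in> J In \<longrightarrow> [x, y] \<in> J R)"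
  by (rule holds_eqI) (auto simp: F4_def)

lemma holds_star_F4:
  "D \<noteq> {} \<Longrightarrow> holds_star D J {R} U F4 \<longleftrightarrow>
    (\<forall>x\<in>D. \<forall>y\<in>D. [x, y] \<in> J In \<longrightarrow> [x, y] \<in> U R \<and> [x, y] \<in> J R)"
  by (rule holds_star_eqI) (auto simp: F4_def)

lemma holds_F5:
  "D \<noteq> {} \<Longrightarrow> holds D J F5 \<longleftrightarrow>
    (\<forall>x\<in>D. \<forall>y\<in>D. \<forall>z\<in>D. [x, z] \<in> J R \<and> [z, y] \<in> J R \<longrightarrow> [x, y] \<in> J R)"
  by (rule holds_eqI) (auto simp: F5_def)

lemma holds_star_F5:
  "D \<noteq> {} \<Longrightarrow> holds_star D J {R} U F5 \<longleftrightarrow>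
    (\<forall>x\<in>D. \<forall>y\<in>D. \<forall>z\<in>D. ([x, z] \<in> U R \<and> [z, y] \<in> U R \<longrightarrow> [x, y] \<in> U R)
      \<and> ([x, z] \<in> J R \<and> [z, y] \<in> J R \<longrightarrow> [x, y] \<in> J R))"
  by (rule holds_star_eqI) (auto simp: F5_def)

lemma SM_R_iff:
  assumes ri: "rel_interp D arity J" and "D \<noteq> {}"
  shows "SM D arity {R} (Conj F4 F5) J \<longleftrightarrow> J R = lists_of_rel ((rel_of (J In))\<^sup>+)"
proof -
  let ?T = "rel_of (J In)"
  let ?P = "\<lambda>S. (\<forall>x\<in>D. \<forall>y\<in>D. [x, y] \<in> J In \<longrightarrow> [x, y] \<in> S)
    \<and> (\<forall>x\<in>D. \<forall>y\<in>D. \<forall>z\<in>D. [x, z] \<in> S \<and> [z, y] \<in> S \<longrightarrow> [x, y] \<in> S)"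
  have T: "?T \<subseteq> D \<times> D" by (rule rel_of_subset_Times[OF ri]) simp
  then have T_trancl: "?T\<^sup>+ \<subseteq> D \<times> D" by (rule trancl_subset_Sigma)
  show ?thesis
  proof (rule SM_single_iff_least[OF ri, where P = ?P])
    show "lists_of_rel (?T\<^sup>+) \<subseteq> {xs. length xs = arity R \<and> set xs \<subseteq> D}"
      using lists_of_rel_subset[OF T_trancl] by simp
    show "?P (lists_of_rel (?T\<^sup>+))"
    proof (intro conjI ballI impI)
      fix x y assume "[x, y] \<in> J In"
      then show "[x, y] \<in> lists_of_rel (?T\<^sup>+)" by (simp add: r_into_trancl')
    next
      fix x y z assume "[x, z] \<in> lists_of_rel (?T\<^sup>+) \<and> [z, y] \<in> lists_of_rel (?T\<^sup>+)"
      then have "(x, z) \<in> ?T\<^sup>+" "(z, y) \<in> ?T\<^sup>+" by simp_all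
      then have "(x, y) \<in> ?T\<^sup>+" by (rule trancl_trans)
      then show "[x, y] \<in> lists_of_rel (?T\<^sup>+)" by simp
    qed
    show "lists_of_rel (?T\<^sup>+) \<subseteq> S" if "?P S" for S
    proof -
      have "[x, y] \<in> S" if "(x, y) \<in> ?T\<^sup>+" for x y
        using that
      proof (induction rule: trancl_induct)
        case (base y)
        then have "x \<in> D" "y \<in> D" using T by blast+
        with base \<open>?P S\<close> show ?case by simp
      next
        case (step y z)
        then have "x \<in> D" "y \<in> D" "z \<in> D" using T T_trancl by blast+
        moreover have "[y, z] \<in> J In" using step.hyps(2) by simp
        ultimately show ?case using step.IH \<open>?P S\<close> by blast
      qed
      then show ?thesis unfolding lists_of_rel_def by blast
    qed
    show "holds D J (Conj F4 F5) \<longleftrightarrow> ?P (J R)"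
      unfolding holds_Conj holds_F4[OF \<open>D \<noteq> {}\<close>] holds_F5[OF \<open>D \<noteq> {}\<close>] ..
    show "holds_star D J {R} U (Conj F4 F5) \<longleftrightarrow> ?P (U R)" if "holds D J (Conj F4 F5)" for U
    proof -
      from that have "holds D J F4" "holds D J F5" unfolding holds_Conj by simp_all
      then show ?thesis
        unfolding holds_star_Conj holds_star_F4[OF \<open>D \<noteq> {}\<close>] holds_star_F5[OF \<open>D \<noteq> {}\<close>]
          holds_F4[OF \<open>D \<noteq> {}\<close>] holds_F5[OF \<open>D \<noteq> {}\<close>]
        by blast
    qed
  qed
qed

lemma holds_F6:
  "D \<noteq> {} \<Longrightarrow> holds D J F6 \<longleftrightarrow>
    (\<forall>x\<in>D. \<forall>y\<in>D. [x] \<in> J Vertex \<and> [y] \<in> J Vertex \<longrightarrow> [x, y] \<in> J R)"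
  by (rule holds_eqI) (auto simp: F6_def Neg_def)

lemma holds_F7:
  assumes ri: "rel_interp D arity J" and "D \<noteq> {}"
  shows "holds D J F7 \<longleftrightarrow> single_valued (rel_of (J In))"
proof -
  have "holds D J F7 \<longleftrightarrow> (\<forall>x\<in>D. \<forall>y\<in>D. \<forall>z\<in>D. [x, y] \<in> J In \<and> [x, z] \<in> J In \<longrightarrow> y = z)"
    by (rule holds_eqI[OF \<open>D \<noteq> {}\<close>]) (auto simp: F7_def Neg_def)
  also have "\<dots> \<longleftrightarrow> (\<forall>x y. (x, y) \<in> rel_of (J In) \<longrightarrow> (\<forall>z. (x, z) \<in> rel_of (J In) \<longrightarrow> y = z))"
    using rel_of_subset_Times[OF ri, of In] by (simp add: subset_iff) blast
  finally show ?thesis unfolding single_valued_def .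
qed

lemma phi_ProgM_hiding:
  assumes "(\<Union>M\<in>set Ms. fpreds M) - S = H"
  shows "phi D ar (ProgM S Ms) I \<longleftrightarrow>
    (\<exists>J. rel_interp D ar J \<and> (\<forall>q. q \<notin> H \<longrightarrow> J q = I q) \<and> (\<forall>M\<in>set Ms. phi D ar M J))"
  using assms by simp

lemma phi_ProgM_no_hiding:
  assumes "(\<Union>M\<in>set Ms. fpreds M) \<subseteq> S" and "rel_interp D ar I"
  shows "phi D ar (ProgM S Ms) I \<longleftrightarrow> (\<forall>M\<in>set Ms. phi D ar M I)"
proof -
  have "(\<forall>q. q \<notin> {} \<longrightarrow> J q = I q) \<longleftrightarrow> J = I" for J
    by auto
  then show ?thesis
    using assms phi_ProgM_hiding[of Ms S "{}" D ar I] by auto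
qed

lemma fpreds_Pi_cn: "fpreds Pi_cn = {Vertex, In}"
  by (auto simp: Pi_cn_def F4_def F5_def F6_def Neg_def)

lemma phi_Pi_cn_iff:
  assumes ri: "rel_interp D arity J" and "D \<noteq> {}"
  shows "phi D arity Pi_cn J \<longleftrightarrow>
    (\<forall>x\<in>D. \<forall>y\<in>D. [x] \<in> J Vertex \<and> [y] \<in> J Vertex \<longrightarrow> (x, y) \<in> (rel_of (J In))\<^sup>+)"
    (is "_ \<longleftrightarrow> ?conn")
proof -
  let ?T = "rel_of (J In)"
  have hidden: "(\<Union>M\<in>set [DefM {R} (Conj F4 F5), FormM F6]. fpreds M) - {Vertex, In} = {R}"
    by (auto simp: F4_def F5_def F6_def Neg_def)
  have "phi D arity Pi_cn J \<longleftrightarrow> (\<exists>K. rel_interp D arity K \<and> (\<forall>q. q \<noteq> R \<longrightarrow> K q = J q)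
      \<and> SM D arity {R} (Conj F4 F5) K \<and> holds D K F6)"
    unfolding Pi_cn_def phi_ProgM_hiding[OF hidden] by simp
  also have "\<dots> \<longleftrightarrow> ?conn"
  proof
    assume "\<exists>K. rel_interp D arity K \<and> (\<forall>q. q \<noteq> R \<longrightarrow> K q = J q)
      \<and> SM D arity {R} (Conj F4 F5) K \<and> holds D K F6"
    then obtain K where K: "rel_interp D arity K" "\<forall>q. q \<noteq> R \<longrightarrow> K q = J q"
      and "SM D arity {R} (Conj F4 F5) K" "holds D K F6" by blast
    then have "K R = lists_of_rel ((rel_of (K In))\<^sup>+)" using SM_R_iff[OF K(1) \<open>D \<noteq> {}\<close>] by blast
    with K(2) \<open>holds D K F6\<close> show ?conn unfolding holds_F6[OF \<open>D \<noteq> {}\<close>] by simp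
  next
    assume ?conn
    define K where "K = J(R := lists_of_rel (?T\<^sup>+))"
    have "?T \<subseteq> D \<times> D" by (rule rel_of_subset_Times[OF ri]) simp
    then have "?T\<^sup>+ \<subseteq> D \<times> D" by (rule trancl_subset_Sigma)
    then have "rel_interp D arity K"
      unfolding K_def using lists_of_rel_subset by (intro rel_interp_fun_upd[OF ri]) simp
    moreover have "SM D arity {R} (Conj F4 F5) K"
      using SM_R_iff[OF \<open>rel_interp D arity K\<close> \<open>D \<noteq> {}\<close>] unfolding K_def by simp
    moreover have "holds D K F6"
      using \<open>?conn\<close> unfolding holds_F6[OF \<open>D \<noteq> {}\<close>] K_def by simp
    ultimately show "\<exists>K. rel_interp D arity K \<and> (\<forall>q. q \<noteq> R \<longrightarrow> K q = J q)
      \<and> SM D arity {R} (Conj F4 F5) K \<and> holds D K F6"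
      unfolding K_def by auto
  qed
  finally show ?thesis .
qed

lemma phi_Pi_hc_iff:
  assumes "rel_interp D arity J"
  shows "phi D arity Pi_hc J \<longleftrightarrow> phi D arity Pi_cn J \<and> holds D J F7"
  unfolding Pi_hc_def using assms
  by (subst phi_ProgM_no_hiding) (auto simp: fpreds_Pi_cn F7_def Neg_def)

lemma phi_Pi_sg_iff:
  assumes "rel_interp D arity J"
  shows "phi D arity Pi_sg J \<longleftrightarrow> SM D arity {Vertex} (Conj F1 F2) J \<and> SM D arity {In} F3 J"
  unfolding Pi_sg_def using assms
  by (subst phi_ProgM_no_hiding) (auto simp: F1_def F2_def F3_def Neg_def)

lemma phi_Pi_1_iff:
  assumes ri: "rel_interp D arity J" and "D \<noteq> {}" and cover: "D \<subseteq> Field (rel_of (J Edge))"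
  shows "phi D arity Pi_1 J \<longleftrightarrow> rel_of (J In) \<subseteq> rel_of (J Edge) \<and> single_valued (rel_of (J In))
    \<and> D \<times> D \<subseteq> (rel_of (J In))\<^sup>+"
    (is "_ \<longleftrightarrow> ?cycle")
proof -
  let ?vertices = "{[v] | v. v \<in> D}"
  have hidden: "(\<Union>M\<in>set [Pi_sg, Pi_hc]. fpreds M) - {Edge, In} = {Vertex}"
    by (auto simp: Pi_sg_def Pi_hc_def fpreds_Pi_cn F1_def F2_def F3_def F7_def Neg_def)
  have components: "phi D arity Pi_sg K \<and> phi D arity Pi_hc K \<longleftrightarrow> K Vertex = ?vertices \<and> ?cycle"
    if K: "rel_interp D arity K" "\<forall>q. q \<noteq> Vertex \<longrightarrow> K q = J q" for K
  proof -
    have eqs: "K Edge = J Edge" "K In = J In" using K(2) by simp_all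
    with cover have cover_K: "D \<subseteq> Field (rel_of (K Edge))" by simp
    have "phi D arity Pi_sg K \<and> phi D arity Pi_hc K \<longleftrightarrow> K Vertex = ?vertices
        \<and> rel_of (K In) \<subseteq> rel_of (K Edge)
        \<and> (\<forall>x\<in>D. \<forall>y\<in>D. [x] \<in> K Vertex \<and> [y] \<in> K Vertex \<longrightarrow> (x, y) \<in> (rel_of (K In))\<^sup>+)
        \<and> single_valued (rel_of (K In))"
      unfolding phi_Pi_sg_iff[OF K(1)] phi_Pi_hc_iff[OF K(1)]
        SM_vertex_iff[OF K(1) \<open>D \<noteq> {}\<close> cover_K] SM_in_iff[OF K(1) \<open>D \<noteq> {}\<close>]
        phi_Pi_cn_iff[OF K(1) \<open>D \<noteq> {}\<close>] holds_F7[OF K(1) \<open>D \<noteq> {}\<close>]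
      by blast
    also have "\<dots> \<longleftrightarrow> K Vertex = ?vertices \<and> ?cycle" using eqs by auto
    finally show ?thesis .
  qed
  have "phi D arity Pi_1 J \<longleftrightarrow> (\<exists>K. rel_interp D arity K \<and> (\<forall>q. q \<noteq> Vertex \<longrightarrow> K q = J q)
      \<and> phi D arity Pi_sg K \<and> phi D arity Pi_hc K)"
    unfolding Pi_1_def phi_ProgM_hiding[OF hidden] by simp
  also have "\<dots> \<longleftrightarrow> ?cycle"
  proof
    assume "\<exists>K. rel_interp D arity K \<and> (\<forall>q. q \<noteq> Vertex \<longrightarrow> K q = J q)
      \<and> phi D arity Pi_sg K \<and> phi D arity Pi_hc K"
    then show ?cycle using components by blast
  next
    assume ?cycle
    define K where "K = J(Vertex := ?vertices)"
    have "rel_interp D arity K" unfolding K_def by (rule rel_interp_fun_upd[OF ri]) auto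
    moreover have "\<forall>q. q \<noteq> Vertex \<longrightarrow> K q = J q" unfolding K_def by simp
    moreover from calculation have "phi D arity Pi_sg K \<and> phi D arity Pi_hc K"
      using components \<open>?cycle\<close> unfolding K_def by simp
    ultimately show "\<exists>K. rel_interp D arity K \<and> (\<forall>q. q \<noteq> Vertex \<longrightarrow> K q = J q)
      \<and> phi D arity Pi_sg K \<and> phi D arity Pi_hc K" by blast
  qed
  finally show ?thesis .
qed

lemma phi_Pi_1E_iff:
  assumes ri: "rel_interp D arity I" and "D \<noteq> {}" and "finite E" and E: "E \<subseteq> D \<times> D"
    and cover: "D \<subseteq> Field E"
  shows "phi D arity (Pi_1E E) I \<longleftrightarrow> rel_of (I In) \<subseteq> E \<and> single_valued (rel_of (I In))
    \<and> D \<times> D \<subseteq> (rel_of (I In))\<^sup>+"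
    (is "_ \<longleftrightarrow> ?cycle")
proof -
  have hidden: "(\<Union>M\<in>set [Pi_1, M_E E]. fpreds M) - {In} = {Edge}"
    using preds_edge_fact_list
    by (auto simp: Pi_1_def Pi_sg_def Pi_hc_def M_E_def edge_facts_def fpreds_Pi_cn
        F1_def F2_def F3_def F7_def Neg_def)
  have components: "phi D arity Pi_1 K \<and> SM D arity {Edge} (edge_facts E) K
      \<longleftrightarrow> K Edge = lists_of_rel E \<and> ?cycle"
    if K: "rel_interp D arity K" "\<forall>q. q \<noteq> Edge \<longrightarrow> K q = I q" for K
  proof -
    have "K In = I In" using K(2) by simp
    note SM_edge = SM_edge_facts_iff[OF K(1) \<open>D \<noteq> {}\<close> \<open>finite E\<close> E]
    show ?thesis
    proof (cases "K Edge = lists_of_rel E")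
      case True
      with cover have "D \<subseteq> Field (rel_of (K Edge))" by simp
      with True \<open>K In = I In\<close> show ?thesis
        unfolding SM_edge phi_Pi_1_iff[OF K(1) \<open>D \<noteq> {}\<close> \<open>D \<subseteq> Field (rel_of (K Edge))\<close>] by simp
    qed (simp add: SM_edge)
  qed
  have "phi D arity (Pi_1E E) I \<longleftrightarrow> (\<exists>K. rel_interp D arity K \<and> (\<forall>q. q \<noteq> Edge \<longrightarrow> K q = I q)
      \<and> phi D arity Pi_1 K \<and> SM D arity {Edge} (edge_facts E) K)"
    unfolding Pi_1E_def phi_ProgM_hiding[OF hidden] by (simp add: M_E_def)
  also have "\<dots> \<longleftrightarrow> ?cycle"
  proof
    assume "\<exists>K. rel_interp D arity K \<and> (\<forall>q. q \<noteq> Edge \<longrightarrow> K q = I q)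
      \<and> phi D arity Pi_1 K \<and> SM D arity {Edge} (edge_facts E) K"
    then show ?cycle using components by blast
  next
    assume ?cycle
    define K where "K = I(Edge := lists_of_rel E)"
    have "rel_interp D arity K"
      unfolding K_def using lists_of_rel_subset[OF E] by (intro rel_interp_fun_upd[OF ri]) simp
    moreover have "\<forall>q. q \<noteq> Edge \<longrightarrow> K q = I q" unfolding K_def by simp
    moreover from calculation have "phi D arity Pi_1 K \<and> SM D arity {Edge} (edge_facts E) K"
      using components \<open>?cycle\<close> unfolding K_def by simp
    ultimately show "\<exists>K. rel_interp D arity K \<and> (\<forall>q. q \<noteq> Edge \<longrightarrow> K q = I q)
      \<and> phi D arity Pi_1 K \<and> SM D arity {Edge} (edge_facts E) K" by blast
  qed
  finally show ?thesis .
qed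

theorem proposition5:
  fixes V :: "'a set" and E :: "('a \<times> 'a) set" and I :: "pred \<Rightarrow> 'a list set"
  assumes "finite V" and "V \<noteq> {}" and "E \<subseteq> V \<times> V"
    and "\<forall>v\<in>V. \<exists>(a, b)\<in>E. v = a \<or> v = b"
    and "herbrand_over V arity {In} I"
  shows "answer_set V arity (Pi_1E E) I \<longleftrightarrow> ham_cycle V E {(x, y). [x, y] \<in> I In}"
proof -
  have ri: "rel_interp V arity I" using assms(5) unfolding herbrand_over_def by blast
  have "finite E" using assms(1,3) by (meson finite_SigmaI finite_subset)
  have "V \<subseteq> Field E" using assms(4) unfolding Field_def by fastforce
  have "answer_set V arity (Pi_1E E) I \<longleftrightarrow> phi V arity (Pi_1E E) I"
    using assms(5) unfolding answer_set_def Pi_1E_def by simp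
  also have "\<dots> \<longleftrightarrow> rel_of (I In) \<subseteq> E \<and> single_valued (rel_of (I In)) \<and> V \<times> V \<subseteq> (rel_of (I In))\<^sup>+"
    by (rule phi_Pi_1E_iff[OF ri assms(2) \<open>finite E\<close> assms(3) \<open>V \<subseteq> Field E\<close>])
  also have "\<dots> \<longleftrightarrow> ham_cycle V E (rel_of (I In))"
    using ham_cycle_iff_strongly_connected[OF rel_of_subset_Times[OF ri] assms(2)] by simp
  finally show ?thesis unfolding rel_of_def .
qed

end
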